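(* Let $H\in\mathbb{R}^{n\times n}$ be a $\mu$-incoherent symmetric positive semi-definite matrix, and let $H=(\grave U+I)D(\grave U+I)^T$ be its LDL decomposition, with $\grave U$ strictly upper triangular and $D$ diagonal with nonnegative entries. Then $$\operatorname{tr}(D)\le\frac{\mu^2}{n}\operatorname{tr}(H^{1/2})^2.$$
   Context: A symmetric matrix $H\in\mathbb{R}^{n\times n}$ is $\mu$-incoherent if it has an eigendecomposition $H=Q\Lambda Q^T$ ($Q$ orthogonal, $\Lambda$ diagonal) such that $|Q_{ij}|\le\mu/\sqrt{n}$ for all $i,j$. $H^{1/2}$ denotes the positive semi-definite square root. *)

theory Defs
  imports "Jordan_Normal_Form.Matrix"
begin

definition mtrace :: "real mat \<Rightarrow> real" where
  "mtrace A = (\<Sum>i<dim_row A. A $$ (i,i))"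

definition symmetric_mat :: "real mat \<Rightarrow> bool" where
  "symmetric_mat A \<longleftrightarrow> transpose_mat A = A"

definition psd_mat :: "nat \<Rightarrow> real mat \<Rightarrow> bool" where
  "psd_mat n A \<longleftrightarrow> A \<in> carrier_mat n n \<and> symmetric_mat A \<and>
     (\<forall>x \<in> carrier_vec n. 0 \<le> x \<bullet> (A *\<^sub>v x))"

definition orthogonal_real_mat :: "nat \<Rightarrow> real mat \<Rightarrow> bool" where
  "orthogonal_real_mat n Q \<longleftrightarrow> Q \<in> carrier_mat n n \<and> transpose_mat Q * Q = 1\<^sub>m n"

definition incoherent :: "nat \<Rightarrow> real \<Rightarrow> real mat \<Rightarrow> bool" where
  "incoherent n \<mu> H \<longleftrightarrow> symmetric_mat H \<and>
     (\<exists>Q \<Lambda>. orthogonal_real_mat n Q \<and> \<Lambda> \<in> carrier_mat n n \<and> diagonal_mat \<Lambda> \<and>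
        H = Q * \<Lambda> * transpose_mat Q \<and>
        (\<forall>i<n. \<forall>j<n. \<bar>Q $$ (i,j)\<bar> \<le> \<mu> / sqrt (real n)))"

definition psd_sqrt :: "nat \<Rightarrow> real mat \<Rightarrow> real mat" where
  "psd_sqrt n H = (THE S. psd_mat n S \<and> S * S = H)"

definition strictly_upper_triangular :: "real mat \<Rightarrow> bool" where
  "strictly_upper_triangular U \<longleftrightarrow>
     (\<forall>i<dim_row U. \<forall>j<dim_col U. j \<le> i \<longrightarrow> U $$ (i,j) = 0)"

end

theory Submission
  imports Defs "Jordan_Normal_Form.Determinant"
begin

text \<open>Write \<open>H = Q \<Lambda> Q\<^sup>T\<close> and let \<open>V\<close> be the inverse of the unit upper triangular factor
  \<open>L = U + I\<close>. For \<open>R = V Q\<close> one gets \<open>R \<Lambda> R\<^sup>T = D\<close>, so the rows of \<open>R \<Lambda>\<^sup>1\<^sup>/\<^sup>2\<close> are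
  orthogonal with squared norms \<open>d\<^sub>k\<close>, and \<open>R \<Lambda> Q\<^sup>T = V H = D L\<^sup>T\<close>, whose diagonal gives
  \<open>d\<^sub>k = \<Sum>\<^sub>j R\<^sub>k\<^sub>j \<lambda>\<^sub>j Q\<^sub>k\<^sub>j\<close>. Bounding \<open>|Q\<^sub>k\<^sub>j| \<le> \<mu>/\<surd>n\<close> and applying Cauchy-Schwarz
  with weights \<open>\<surd>\<lambda>\<^sub>j\<close> bounds \<open>d\<^sub>k\<^sup>2\<close> by \<open>\<mu>\<^sup>2/n \<Sum>\<^sub>j \<surd>\<lambda>\<^sub>j \<Sum>\<^sub>j \<surd>\<lambda>\<^sub>j \<lambda>\<^sub>j R\<^sub>k\<^sub>j\<^sup>2\<close>.
  Dividing by \<open>d\<^sub>k\<close>, summing over \<open>k\<close> and using Bessel's inequality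
  \<open>\<lambda>\<^sub>j \<Sum>\<^sub>k R\<^sub>k\<^sub>j\<^sup>2 / d\<^sub>k \<le> 1\<close> gives \<open>tr D \<le> \<mu>\<^sup>2/n (\<Sum>\<^sub>j \<surd>\<lambda>\<^sub>j)\<^sup>2\<close>. Finally
  \<open>H\<^sup>1\<^sup>/\<^sup>2 = Q \<Lambda>\<^sup>1\<^sup>/\<^sup>2 Q\<^sup>T\<close> by uniqueness of the positive semi-definite square root, so
  \<open>tr H\<^sup>1\<^sup>/\<^sup>2 = \<Sum>\<^sub>j \<surd>\<lambda>\<^sub>j\<close>.\<close>

lemma mult_mat_entry_sum:
  fixes A B :: "'a :: comm_semiring_0 mat"
  assumes "A \<in> carrier_mat n m" "B \<in> carrier_mat m k" "i < n" "j < k"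
  shows "(A * B) $$ (i,j) = (\<Sum>l<m. A $$ (i,l) * B $$ (l,j))"
  using assms by (simp add: scalar_prod_def lessThan_atLeast0)

lemma mult_diagonal_mat_entry:
  fixes A B :: "'a :: comm_semiring_1 mat"
  assumes "A \<in> carrier_mat n m" "B \<in> carrier_mat m m" "diagonal_mat B" "i < n" "j < m"
  shows "(A * B) $$ (i,j) = A $$ (i,j) * B $$ (j,j)"
proof -
  have "(A * B) $$ (i,j) = (\<Sum>l<m. A $$ (i,l) * B $$ (l,j))"
    using assms by (intro mult_mat_entry_sum)
  also have "\<dots> = (\<Sum>l<m. if l = j then A $$ (i,l) * B $$ (l,j) else 0)"
    using assms unfolding diagonal_mat_def by (intro sum.cong) auto
  finally show ?thesis using assms(5) by simp
qed

lemma diagonal_mat_mult_entry: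
  fixes A B :: "'a :: comm_semiring_1 mat"
  assumes "A \<in> carrier_mat n n" "B \<in> carrier_mat n m" "diagonal_mat A" "i < n" "j < m"
  shows "(A * B) $$ (i,j) = A $$ (i,i) * B $$ (i,j)"
proof -
  have "(A * B) $$ (i,j) = (\<Sum>l<n. A $$ (i,l) * B $$ (l,j))"
    using assms by (intro mult_mat_entry_sum)
  also have "\<dots> = (\<Sum>l<n. if l = i then A $$ (i,l) * B $$ (l,j) else 0)"
    using assms unfolding diagonal_mat_def by (intro sum.cong) auto
  finally show ?thesis using assms(4) by simp
qed

lemma mult_diagonal_mult_entry_sum:
  fixes A B C :: "'a :: comm_semiring_1 mat"
  assumes "A \<in> carrier_mat n m" "B \<in> carrier_mat m m" "C \<in> carrier_mat m k" "diagonal_mat B"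
    and "i < n" "j < k"
  shows "(A * B * C) $$ (i,j) = (\<Sum>l<m. A $$ (i,l) * B $$ (l,l) * C $$ (l,j))"
proof -
  have "(A * B * C) $$ (i,j) = (\<Sum>l<m. (A * B) $$ (i,l) * C $$ (l,j))"
    using assms by (intro mult_mat_entry_sum[of _ n m]) auto
  also have "\<dots> = (\<Sum>l<m. A $$ (i,l) * B $$ (l,l) * C $$ (l,j))"
    using assms by (intro sum.cong refl arg_cong2[where f = "(*)"] mult_diagonal_mat_entry) auto
  finally show ?thesis .
qed

lemma scalar_prod_mult_mat_vec_sum:
  fixes A :: "'a :: comm_semiring_0 mat"
  assumes "A \<in> carrier_mat n n" "x \<in> carrier_vec n"
  shows "x \<bullet> (A *\<^sub>v x) = (\<Sum>i<n. x $ i * (\<Sum>j<n. A $$ (i,j) * x $ j))"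
  using assms by (simp add: scalar_prod_def lessThan_atLeast0)

lemma mult_left_inverse_cancel:
  fixes V L X :: "'a :: semiring_1 mat"
  assumes "V \<in> carrier_mat n m" "L \<in> carrier_mat m n" "X \<in> carrier_mat n k" "V * L = 1\<^sub>m n"
  shows "V * (L * X) = X"
  using assms by (simp flip: assoc_mult_mat[of V n m L n X])

lemma orthogonal_real_mat_mult_transpose:
  assumes "orthogonal_real_mat n Q"
  shows "Q * transpose_mat Q = 1\<^sub>m n"
  using assms unfolding orthogonal_real_mat_def
  by (intro mat_mult_left_right_inverse[of "transpose_mat Q" n Q]) auto

lemma mtrace_mult_comm:
  fixes A B :: "real mat"
  assumes A: "A \<in> carrier_mat n m" and B: "B \<in> carrier_mat m n"
  shows "mtrace (A * B) = mtrace (B * A)"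
proof -
  have "mtrace (A * B) = (\<Sum>i<n. \<Sum>l<m. A $$ (i,l) * B $$ (l,i))"
    using A B unfolding mtrace_def by (intro sum.cong refl mult_mat_entry_sum[OF A B]) auto
  also have "\<dots> = (\<Sum>l<m. \<Sum>i<n. B $$ (l,i) * A $$ (i,l))"
    by (subst sum.swap) (simp add: mult.commute)
  also have "\<dots> = mtrace (B * A)"
    using A B unfolding mtrace_def by (intro sum.cong refl mult_mat_entry_sum[OF B A, symmetric]) auto
  finally show ?thesis .
qed

lemma mtrace_orthogonal_conj:
  assumes Q: "orthogonal_real_mat n Q" and A: "A \<in> carrier_mat n n"
  shows "mtrace (Q * A * transpose_mat Q) = mtrace A"
proof -
  have Qc: "Q \<in> carrier_mat n n" and QtQ: "transpose_mat Q * Q = 1\<^sub>m n"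
    using Q unfolding orthogonal_real_mat_def by auto
  have "mtrace (Q * A * transpose_mat Q) = mtrace (transpose_mat Q * (Q * A))"
    using Qc A by (intro mtrace_mult_comm[of _ n n]) auto
  also have "transpose_mat Q * (Q * A) = A"
    using Qc A QtQ by (simp add: mult_left_inverse_cancel[of _ n n])
  finally show ?thesis .
qed

lemma psd_mat_diag_nonneg:
  assumes "psd_mat n A" "i < n"
  shows "0 \<le> A $$ (i,i)"
proof -
  have "A \<in> carrier_mat n n" and "0 \<le> unit_vec n i \<bullet> (A *\<^sub>v unit_vec n i)"
    using assms unfolding psd_mat_def by auto
  then show ?thesis using assms(2) by simp
qed

lemma psd_mat_transpose_conj:
  assumes A: "psd_mat n A" and B: "B \<in> carrier_mat n m"
  shows "psd_mat m (transpose_mat B * A * B)"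
proof -
  have Ac: "A \<in> carrier_mat n n" and Asym: "transpose_mat A = A"
    and Apos: "\<forall>y \<in> carrier_vec n. 0 \<le> y \<bullet> (A *\<^sub>v y)"
    using A unfolding psd_mat_def symmetric_mat_def by auto
  have "transpose_mat (transpose_mat B * A * B) = transpose_mat B * transpose_mat (transpose_mat B * A)"
    using Ac B by (intro transpose_mult[of _ m n _ m]) auto
  also have "transpose_mat (transpose_mat B * A) = A * B"
    using Ac B Asym by (simp add: transpose_mult[of _ m n _ n])
  finally have "transpose_mat (transpose_mat B * A * B) = transpose_mat B * A * B"
    using Ac B by simp
  moreover have "0 \<le> x \<bullet> ((transpose_mat B * A * B) *\<^sub>v x)" if x: "x \<in> carrier_vec m" for x
  proof -
    have Bx: "B *\<^sub>v x \<in> carrier_vec n" using B x by simp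
    have "x \<bullet> ((transpose_mat B * A * B) *\<^sub>v x) = x \<bullet> (transpose_mat B *\<^sub>v (A *\<^sub>v (B *\<^sub>v x)))"
      using Ac B x by (simp add: assoc_mult_mat_vec[of "transpose_mat B" m n "A * B" m])
    also have "\<dots> = (transpose_mat B *\<^sub>v (A *\<^sub>v (B *\<^sub>v x))) \<bullet> x"
      using Ac B x by (intro comm_scalar_prod[of _ m]) auto
    also have "\<dots> = (A *\<^sub>v (B *\<^sub>v x)) \<bullet> (B *\<^sub>v x)"
      using Ac B x by (intro transpose_vec_mult_scalar) auto
    also have "\<dots> = (B *\<^sub>v x) \<bullet> (A *\<^sub>v (B *\<^sub>v x))"
      using Ac Bx by (intro comm_scalar_prod[of _ n]) auto
    finally show ?thesis using Apos Bx by simp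
  qed
  ultimately show ?thesis
    using Ac B unfolding psd_mat_def symmetric_mat_def by auto
qed

lemma psd_mat_diagonal:
  fixes \<Lambda> :: "real mat"
  assumes "\<Lambda> \<in> carrier_mat n n" "diagonal_mat \<Lambda>" "\<forall>i<n. 0 \<le> \<Lambda> $$ (i,i)"
  shows "psd_mat n \<Lambda>"
proof -
  have "x \<bullet> (\<Lambda> *\<^sub>v x) = (\<Sum>i<n. \<Lambda> $$ (i,i) * (x $ i)\<^sup>2)" if "x \<in> carrier_vec n" for x
  proof -
    have "x \<bullet> (\<Lambda> *\<^sub>v x) = (\<Sum>i<n. x $ i * (\<Sum>j<n. if j = i then \<Lambda> $$ (i,j) * x $ j else 0))"
      using assms that unfolding scalar_prod_mult_mat_vec_sum[OF assms(1) that]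
      unfolding diagonal_mat_def by (intro sum.cong refl arg_cong2[where f = "(*)"]) auto
    then show ?thesis by (simp add: power2_eq_square mult_ac)
  qed
  moreover have "transpose_mat \<Lambda> = \<Lambda>"
    using assms unfolding diagonal_mat_def by (intro eq_matI) (auto, metis)
  ultimately show ?thesis
    using assms unfolding psd_mat_def symmetric_mat_def by (auto intro!: sum_nonneg)
qed

lemma weighted_cauchy_schwarz:
  fixes a x :: "nat \<Rightarrow> real"
  assumes "\<forall>j<n. 0 \<le> a j"
  shows "(\<Sum>j<n. a j * x j)\<^sup>2 \<le> (\<Sum>j<n. a j) * (\<Sum>j<n. a j * (x j)\<^sup>2)"
proof -
  let ?A = "\<Sum>j<n. a j" and ?B = "\<Sum>j<n. a j * (x j)\<^sup>2" and ?C = "\<Sum>j<n. a j * x j"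
  have "0 \<le> (\<Sum>i<n. \<Sum>j<n. a i * a j * (x i - x j)\<^sup>2)"
    using assms by (intro sum_nonneg) auto
  also have "\<dots> = (\<Sum>i<n. \<Sum>j<n. (a i * (x i)\<^sup>2) * a j + a i * (a j * (x j)\<^sup>2) - 2 * ((a i * x i) * (a j * x j)))"
    by (intro sum.cong refl) (simp add: power2_eq_square algebra_simps)
  also have "\<dots> = (\<Sum>i<n. (a i * (x i)\<^sup>2) * ?A + a i * ?B - 2 * ((a i * x i) * ?C))"
    by (simp only: sum_subtractf sum.distrib sum_distrib_left)
  also have "\<dots> = (\<Sum>i<n. (a i * (x i)\<^sup>2)) * ?A + (\<Sum>i<n. a i) * ?B - (\<Sum>i<n. a i * x i) * (2 * ?C)"
    by (simp only: sum_subtractf sum.distrib sum_distrib_right mult.assoc mult.left_commute[of 2])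
  finally show ?thesis by (simp add: power2_eq_square)
qed

text \<open>The rows \<open>(R k j * sqrt (lam j))\<^sub>j\<close> are orthogonal with squared norms \<open>d k\<close>, so this is
  Bessel's inequality for the unit vector \<open>e\<^sub>i\<close>; it is proved via the vector
  \<open>z = \<Sum>\<^sub>k (R k i / d k) R k\<close>, whose weighted norm is \<open>z i\<close>.\<close>
lemma orthogonal_rows_bessel:
  fixes lam d :: "nat \<Rightarrow> real" and R :: "nat \<Rightarrow> nat \<Rightarrow> real"
  assumes lam: "\<forall>j<n. 0 \<le> lam j"
    and orth: "\<forall>k<n. \<forall>l<n. (\<Sum>j<n. R k j * lam j * R l j) = (if k = l then d k else 0)"
    and i: "i < n"
  shows "lam i * (\<Sum>k | k < n \<and> 0 < d k. (R k i)\<^sup>2 / d k) \<le> 1"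
proof -
  define K where "K = {k. k < n \<and> 0 < d k}"
  have fK: "finite K" and Kn: "K \<subseteq> {..<n}" unfolding K_def by auto
  define s where "s = (\<Sum>k\<in>K. (R k i)\<^sup>2 / d k)"
  define z where "z j = (\<Sum>k\<in>K. R k j * (R k i / d k))" for j
  have s0: "0 \<le> s" unfolding s_def K_def by (intro sum_nonneg) auto
  have zi: "z i = s" unfolding z_def s_def by (intro sum.cong refl) (simp add: power2_eq_square)
  have "(\<Sum>j<n. lam j * (z j)\<^sup>2)
      = (\<Sum>j<n. \<Sum>k\<in>K. \<Sum>l\<in>K. (R k i / d k) * (R l i / d l) * (R k j * lam j * R l j))"
  proof (intro sum.cong refl)
    fix j
    have "lam j * (z j)\<^sup>2
        = (\<Sum>k\<in>K. \<Sum>l\<in>K. lam j * ((R k j * (R k i / d k)) * (R l j * (R l i / d l))))"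
      unfolding power2_eq_square z_def sum_product by (simp only: sum_distrib_left)
    then show "lam j * (z j)\<^sup>2
        = (\<Sum>k\<in>K. \<Sum>l\<in>K. (R k i / d k) * (R l i / d l) * (R k j * lam j * R l j))"
      by (simp only: mult_ac)
  qed
  also have "\<dots> = (\<Sum>k\<in>K. \<Sum>l\<in>K. (R k i / d k) * (R l i / d l) * (\<Sum>j<n. R k j * lam j * R l j))"
    unfolding sum_distrib_left
    by (rule trans[OF sum.swap], rule sum.cong[OF refl], rule sum.swap)
  also have "\<dots> = (\<Sum>k\<in>K. \<Sum>l\<in>K. if l = k then (R k i / d k) * (R l i / d l) * d k else 0)"
    using orth Kn by (intro sum.cong refl) (auto simp: subset_iff)
  also have "\<dots> = s"
    using fK unfolding s_def K_def by (intro sum.cong refl) (auto simp: power2_eq_square)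
  finally have norm_z: "(\<Sum>j<n. lam j * (z j)\<^sup>2) = s" .
  have "lam i * (z i)\<^sup>2 \<le> (\<Sum>j<n. lam j * (z j)\<^sup>2)"
    using i lam by (intro member_le_sum[of i "{..<n}" "\<lambda>j. lam j * (z j)\<^sup>2"]) auto
  then have "lam i * s * s \<le> s" using norm_z zi by (simp add: power2_eq_square mult.assoc)
  then have "lam i * s \<le> 1" using s0
    by (cases "s = 0") (auto simp: mult_le_cancel_right1)
  then show ?thesis unfolding s_def K_def .
qed

lemma bounded_row_sum_sq_le:
  fixes lam r q :: "nat \<Rightarrow> real"
  assumes lam: "\<forall>j<n. 0 \<le> lam j" and q: "\<forall>j<n. \<bar>q j\<bar> \<le> c"
  shows "(\<Sum>j<n. r j * lam j * q j)\<^sup>2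
    \<le> c\<^sup>2 * (\<Sum>j<n. sqrt (lam j)) * (\<Sum>j<n. sqrt (lam j) * (lam j * (r j)\<^sup>2))"
proof -
  define a where "a j = sqrt (lam j)" for j
  have a0: "\<forall>j<n. 0 \<le> a j" unfolding a_def using lam by simp
  have aa: "a j * a j = lam j" if "j < n" for j
    using lam that unfolding a_def by simp
  let ?X = "\<Sum>j<n. a j * (a j * \<bar>r j\<bar>)"
  have "\<bar>\<Sum>j<n. r j * lam j * q j\<bar> \<le> (\<Sum>j<n. \<bar>r j\<bar> * lam j * \<bar>q j\<bar>)"
    using lam by (intro sum_abs[THEN order_trans] sum_mono) (simp add: abs_mult)
  also have "\<dots> \<le> (\<Sum>j<n. \<bar>r j\<bar> * lam j * c)"
    using lam q by (intro sum_mono mult_left_mono) auto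
  also have "\<dots> = c * ?X"
    unfolding sum_distrib_left by (intro sum.cong refl) (simp add: aa[symmetric] mult_ac)
  finally have "(\<Sum>j<n. r j * lam j * q j)\<^sup>2 \<le> (c * ?X)\<^sup>2"
    by (metis abs_ge_zero power2_abs power_mono)
  also have "\<dots> = c\<^sup>2 * ?X\<^sup>2" by (simp add: power_mult_distrib)
  also have "\<dots> \<le> c\<^sup>2 * ((\<Sum>j<n. a j) * (\<Sum>j<n. a j * (a j * \<bar>r j\<bar>)\<^sup>2))"
    by (intro mult_left_mono weighted_cauchy_schwarz[OF a0]) simp
  also have "(\<Sum>j<n. a j * (a j * \<bar>r j\<bar>)\<^sup>2) = (\<Sum>j<n. a j * (lam j * (r j)\<^sup>2))"
    by (intro sum.cong refl) (simp add: power_mult_distrib aa[symmetric] power2_eq_square)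
  finally show ?thesis unfolding a_def by (simp add: mult.assoc)
qed

lemma sum_le_incoherence_bound:
  fixes lam d :: "nat \<Rightarrow> real" and R Q :: "nat \<Rightarrow> nat \<Rightarrow> real"
  assumes lam: "\<forall>j<n. 0 \<le> lam j" and d: "\<forall>k<n. 0 \<le> d k"
    and orth: "\<forall>k<n. \<forall>l<n. (\<Sum>j<n. R k j * lam j * R l j) = (if k = l then d k else 0)"
    and d_eq: "\<forall>k<n. d k = (\<Sum>j<n. R k j * lam j * Q k j)"
    and Q: "\<forall>k<n. \<forall>j<n. \<bar>Q k j\<bar> \<le> c"
  shows "(\<Sum>k<n. d k) \<le> c\<^sup>2 * (\<Sum>j<n. sqrt (lam j))\<^sup>2"
proof -
  define K where "K = {k. k < n \<and> 0 < d k}"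
  define A where "A = (\<Sum>j<n. sqrt (lam j))"
  define W where "W k = (\<Sum>j<n. sqrt (lam j) * (lam j * (R k j)\<^sup>2))" for k
  have A0: "0 \<le> A" unfolding A_def using lam by (intro sum_nonneg) auto
  have dk_le: "d k \<le> c\<^sup>2 * A * (W k / d k)" if k: "k \<in> K" for k
  proof -
    have "d k * d k \<le> c\<^sup>2 * A * W k"
      using bounded_row_sum_sq_le[OF lam, of "Q k" c "R k"] d_eq Q k
      unfolding A_def W_def K_def by (simp add: power2_eq_square)
    then show ?thesis using k unfolding K_def by (simp add: pos_le_divide_eq)
  qed
  have "(\<Sum>k<n. d k) = (\<Sum>k\<in>K. d k)"
    using d by (intro sum.mono_neutral_right) (auto simp: K_def)
  also have "\<dots> \<le> (\<Sum>k\<in>K. c\<^sup>2 * A * (W k / d k))"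
    using dk_le by (intro sum_mono) auto
  also have "\<dots> = c\<^sup>2 * A * (\<Sum>j<n. sqrt (lam j) * (lam j * (\<Sum>k\<in>K. (R k j)\<^sup>2 / d k)))"
    unfolding W_def
    by (simp add: sum_distrib_left sum_divide_distrib mult.assoc sum.swap[of _ K])
  also have "\<dots> \<le> c\<^sup>2 * A * (\<Sum>j<n. sqrt (lam j) * 1)"
  proof (rule mult_left_mono[OF sum_mono])
    fix j assume "j \<in> {..<n}"
    then show "sqrt (lam j) * (lam j * (\<Sum>k\<in>K. (R k j)\<^sup>2 / d k)) \<le> sqrt (lam j) * 1"
      using orthogonal_rows_bessel[OF lam orth, of j] lam unfolding K_def
      by (intro mult_left_mono) auto
  qed (use A0 in auto)
  also have "\<dots> = c\<^sup>2 * A\<^sup>2" unfolding A_def by (simp add: power2_eq_square)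
  finally show ?thesis unfolding A_def .
qed

lemma sum_delta_mult_left:
  fixes f :: "nat \<Rightarrow> real"
  assumes "i < n"
  shows "(\<Sum>m<n. (if i = m then a else 0) * f m) = a * f i"
proof -
  have "(\<Sum>m<n. (if i = m then a else 0) * f m) = (\<Sum>m<n. if m = i then a * f m else 0)"
    by (intro sum.cong) auto
  then show ?thesis using assms by simp
qed

lemma sum_delta_mult_right:
  fixes f a :: "nat \<Rightarrow> real"
  assumes "i < n"
  shows "(\<Sum>m<n. f m * (if m = i then a m else 0)) = f i * a i"
proof -
  have "(\<Sum>m<n. f m * (if m = i then a m else 0)) = (\<Sum>m<n. if m = i then f m * a m else 0)"
    by (intro sum.cong) auto
  then show ?thesis using assms by simp
qed

text \<open>If \<open>t\<^sup>2 = diag l\<close> then \<open>t\<close> commutes with \<open>t\<^sup>2\<close>, hence \<open>t i j (l j - l i) = 0\<close>,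
  and so \<open>t\<close> also commutes with \<open>diag (sqrt l)\<close>.\<close>
lemma square_diag_commute_sqrt:
  fixes l :: "nat \<Rightarrow> real" and t :: "nat \<Rightarrow> nat \<Rightarrow> real"
  assumes sq: "\<forall>i<n. \<forall>j<n. (\<Sum>k<n. t i k * t k j) = (if i = j then l i else 0)"
    and i: "i < n" and j: "j < n"
  shows "t i j * sqrt (l j) = sqrt (l i) * t i j"
proof -
  have "(\<Sum>k<n. t i k * (\<Sum>m<n. t k m * t m j)) = (\<Sum>k<n. \<Sum>m<n. t i k * t k m * t m j)"
    by (simp only: sum_distrib_left mult.assoc)
  also have "\<dots> = (\<Sum>m<n. \<Sum>k<n. t i k * t k m * t m j)" by (rule sum.swap)
  also have "\<dots> = (\<Sum>m<n. (\<Sum>k<n. t i k * t k m) * t m j)" by (simp only: sum_distrib_right)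
  also have "\<dots> = (\<Sum>m<n. (if i = m then l i else 0) * t m j)"
    using sq i by (intro sum.cong refl) auto
  also have "\<dots> = l i * t i j" using i by (rule sum_delta_mult_left)
  finally have "l i * t i j = (\<Sum>k<n. t i k * (\<Sum>m<n. t k m * t m j))" ..
  also have "\<dots> = (\<Sum>k<n. t i k * (if k = j then l k else 0))"
    using sq j by (intro sum.cong refl) auto
  also have "\<dots> = t i j * l j" using j by (rule sum_delta_mult_right)
  finally have "t i j = 0 \<or> l i = l j" by auto
  then show ?thesis by (auto simp: mult.commute)
qed

lemma sym_square_diag_zero_row:
  fixes l :: "nat \<Rightarrow> real" and t :: "nat \<Rightarrow> nat \<Rightarrow> real"
  assumes sq: "\<forall>i<n. \<forall>j<n. (\<Sum>k<n. t i k * t k j) = (if i = j then l i else 0)"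
    and sym: "\<forall>i<n. \<forall>j<n. t i j = t j i"
    and m: "m < n" and lm: "l m = 0" and c: "c < n"
  shows "t m c = 0"
proof -
  have "(\<Sum>k<n. (t m k)\<^sup>2) = (\<Sum>k<n. t m k * t k m)"
    using sym m by (intro sum.cong refl) (auto simp: power2_eq_square)
  also have "\<dots> = 0" using sq m lm by simp
  finally have "\<forall>k\<in>{..<n}. (t m k)\<^sup>2 = 0"
    by (subst sum_nonneg_eq_0_iff[symmetric]) auto
  then show ?thesis using c by auto
qed

text \<open>With \<open>N = diag (sqrt l)\<close> commuting with \<open>t\<close>, every column \<open>g\<close> of \<open>t - N\<close> satisfies
  \<open>(t + N) g = (t\<^sup>2 - N\<^sup>2) e\<^sub>c = 0\<close>; so \<open>g\<^sup>T t g + g\<^sup>T N g = 0\<close>, a sum of two nonnegative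
  terms, which forces \<open>g i = 0\<close> wherever \<open>l i > 0\<close>.\<close>
lemma psd_square_diag_entries:
  fixes l :: "nat \<Rightarrow> real" and t :: "nat \<Rightarrow> nat \<Rightarrow> real"
  assumes l0: "\<forall>i<n. 0 \<le> l i"
    and sq: "\<forall>i<n. \<forall>j<n. (\<Sum>k<n. t i k * t k j) = (if i = j then l i else 0)"
    and sym: "\<forall>i<n. \<forall>j<n. t i j = t j i"
    and psd: "\<And>g. 0 \<le> (\<Sum>i<n. g i * (\<Sum>j<n. t i j * g j))"
    and c: "c < n" and m: "m < n"
  shows "t m c = (if m = c then sqrt (l m) else 0)"
proof (cases "l m = 0")
  case True
  then show ?thesis using sym_square_diag_zero_row[OF sq sym m True c] by auto
next
  case False
  define N where "N i j = (if i = j then sqrt (l i) else 0)" for i j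
  define g where "g i = t i c - N i c" for i
  have annihilate: "(\<Sum>j<n. (t i j + N i j) * g j) = 0" if i: "i < n" for i
  proof -
    have "(\<Sum>j<n. (t i j + N i j) * g j) =
        (\<Sum>j<n. t i j * t j c) - (\<Sum>j<n. t i j * N j c) + (\<Sum>j<n. N i j * t j c) - (\<Sum>j<n. N i j * N j c)"
      unfolding g_def
      by (simp only: distrib_right right_diff_distrib sum.distrib sum_subtractf diff_add_eq add_diff_eq)
    also have "(\<Sum>j<n. t i j * N j c) = t i c * sqrt (l c)"
      unfolding N_def using c by (rule sum_delta_mult_right)
    also have "(\<Sum>j<n. N i j * t j c) = sqrt (l i) * t i c"
      unfolding N_def using i by (rule sum_delta_mult_left)
    also have "(\<Sum>j<n. N i j * N j c) = sqrt (l i) * N i c"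
      unfolding N_def using i by (rule sum_delta_mult_left)
    also have "sqrt (l i) * N i c = (if i = c then l i else 0)"
      unfolding N_def using l0 i by auto
    finally show ?thesis using sq i c square_diag_commute_sqrt[OF sq i c] by simp
  qed
  have "(\<Sum>i<n. g i * (\<Sum>j<n. t i j * g j)) + (\<Sum>i<n. sqrt (l i) * (g i)\<^sup>2)
      = (\<Sum>i<n. g i * (\<Sum>j<n. (t i j + N i j) * g j))"
  proof -
    have "(\<Sum>j<n. N i j * g j) = sqrt (l i) * g i" if "i < n" for i
      unfolding N_def using that by (rule sum_delta_mult_left)
    then have "(\<Sum>i<n. g i * (\<Sum>j<n. (t i j + N i j) * g j))
        = (\<Sum>i<n. g i * (\<Sum>j<n. t i j * g j) + sqrt (l i) * (g i)\<^sup>2)"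
      by (intro sum.cong refl)
        (simp add: distrib_right sum.distrib distrib_left power2_eq_square mult_ac)
    then show ?thesis by (simp only: sum.distrib)
  qed
  also have "\<dots> = 0" using annihilate by simp
  moreover have "0 \<le> (\<Sum>i<n. sqrt (l i) * (g i)\<^sup>2)"
    using l0 by (intro sum_nonneg) auto
  ultimately have "(\<Sum>i<n. sqrt (l i) * (g i)\<^sup>2) = 0"
    using psd[of g] by linarith
  then have "\<forall>i\<in>{..<n}. sqrt (l i) * (g i)\<^sup>2 = 0"
    using l0 by (subst sum_nonneg_eq_0_iff[symmetric]) auto
  then have "g m = 0" using False l0 m by auto
  then show ?thesis unfolding g_def N_def by simp
qed

lemma conj_mult_conj:
  fixes A A' B C :: "'a :: semiring_1 mat"
  assumes A: "A \<in> carrier_mat n n" and A': "A' \<in> carrier_mat n n"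
    and B: "B \<in> carrier_mat n m" and C: "C \<in> carrier_mat m n" and BC: "B * C = 1\<^sub>m n"
  shows "(C * A * B) * (C * A' * B) = C * (A * A') * B"
proof -
  have CA: "C * A \<in> carrier_mat m n" and A'B: "A' * B \<in> carrier_mat n m"
    using A A' B C by auto
  have "(C * A * B) * (C * A' * B) = C * A * (B * (C * (A' * B)))"
    using CA A'B A' B C by (simp only: assoc_mult_mat[OF C A' B] assoc_mult_mat[OF CA B mult_carrier_mat[OF C A'B]])
  also have "B * (C * (A' * B)) = A' * B"
    using B C A'B BC by (rule mult_left_inverse_cancel)
  also have "C * A * (A' * B) = C * (A * A') * B"
    using A A' B C CA by (simp only: assoc_mult_mat[OF CA A' B, symmetric] assoc_mult_mat[OF C A A'])
  finally show ?thesis .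
qed

lemma conj_inverse_conj:
  fixes A B C :: "'a :: semiring_1 mat"
  assumes A: "A \<in> carrier_mat n n" and B: "B \<in> carrier_mat n m" and C: "C \<in> carrier_mat m n"
    and BC: "B * C = 1\<^sub>m n"
  shows "B * (C * A * B) * C = A"
proof -
  have CA: "C * A \<in> carrier_mat m n" and AB: "A * B \<in> carrier_mat n m"
    using A B C by auto
  have "B * (C * A * B) * C = B * (C * (A * B * C))"
    using A B C CA AB
    by (simp only: assoc_mult_mat[OF C A B] assoc_mult_mat[OF B mult_carrier_mat[OF C AB] C]
        assoc_mult_mat[OF C AB C])
  also have "\<dots> = A * B * C"
    using A B C BC by (intro mult_left_inverse_cancel[of _ n m]) auto
  also have "\<dots> = A"
    using A B C BC by simp
  finally show ?thesis .
qed

definition sqrt_diag_mat :: "nat \<Rightarrow> real mat \<Rightarrow> real mat" where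
  "sqrt_diag_mat n \<Lambda> = mat n n (\<lambda>(i,j). if i = j then sqrt (\<Lambda> $$ (i,i)) else 0)"

lemma sqrt_diag_mat_carrier [simp]: "sqrt_diag_mat n \<Lambda> \<in> carrier_mat n n"
  unfolding sqrt_diag_mat_def by simp

lemma dim_sqrt_diag_mat [simp]:
  "dim_row (sqrt_diag_mat n \<Lambda>) = n" "dim_col (sqrt_diag_mat n \<Lambda>) = n"
  unfolding sqrt_diag_mat_def by simp_all

lemma index_sqrt_diag_mat [simp]:
  "i < n \<Longrightarrow> j < n \<Longrightarrow> sqrt_diag_mat n \<Lambda> $$ (i,j) = (if i = j then sqrt (\<Lambda> $$ (i,i)) else 0)"
  unfolding sqrt_diag_mat_def by simp

lemma diagonal_sqrt_diag_mat: "diagonal_mat (sqrt_diag_mat n \<Lambda>)"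
  unfolding diagonal_mat_def sqrt_diag_mat_def by simp

lemma mtrace_sqrt_diag_mat: "mtrace (sqrt_diag_mat n \<Lambda>) = (\<Sum>i<n. sqrt (\<Lambda> $$ (i,i)))"
  unfolding mtrace_def sqrt_diag_mat_def by simp

lemma sqrt_diag_mat_square:
  assumes \<Lambda>: "\<Lambda> \<in> carrier_mat n n" "diagonal_mat \<Lambda>" "\<forall>i<n. 0 \<le> \<Lambda> $$ (i,i)"
  shows "sqrt_diag_mat n \<Lambda> * sqrt_diag_mat n \<Lambda> = \<Lambda>"
proof (rule eq_matI)
  fix i j assume "i < dim_row \<Lambda>" "j < dim_col \<Lambda>"
  then have i: "i < n" and j: "j < n" using \<Lambda> by auto
  have "(sqrt_diag_mat n \<Lambda> * sqrt_diag_mat n \<Lambda>) $$ (i,j)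
      = sqrt_diag_mat n \<Lambda> $$ (i,j) * sqrt_diag_mat n \<Lambda> $$ (j,j)"
    using i j by (intro mult_diagonal_mat_entry diagonal_sqrt_diag_mat) auto
  then show "(sqrt_diag_mat n \<Lambda> * sqrt_diag_mat n \<Lambda>) $$ (i,j) = \<Lambda> $$ (i,j)"
    using \<Lambda> i j unfolding diagonal_mat_def by auto
qed (use \<Lambda> in auto)

lemma psd_square_eq_sqrt_diag_mat:
  assumes T: "psd_mat n T" and TT: "T * T = \<Lambda>"
    and \<Lambda>: "\<Lambda> \<in> carrier_mat n n" "diagonal_mat \<Lambda>" "\<forall>i<n. 0 \<le> \<Lambda> $$ (i,i)"
  shows "T = sqrt_diag_mat n \<Lambda>"
proof -
  have Tc: "T \<in> carrier_mat n n" and Tsym: "transpose_mat T = T"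
    and Tpos: "\<forall>x\<in>carrier_vec n. 0 \<le> x \<bullet> (T *\<^sub>v x)"
    using T unfolding psd_mat_def symmetric_mat_def by auto
  have sq: "\<forall>i<n. \<forall>j<n. (\<Sum>k<n. T $$ (i,k) * T $$ (k,j)) = (if i = j then \<Lambda> $$ (i,i) else 0)"
    using TT \<Lambda> mult_mat_entry_sum[OF Tc Tc] unfolding diagonal_mat_def by auto
  have sym: "\<forall>i<n. \<forall>j<n. T $$ (i,j) = T $$ (j,i)"
    using Tc Tsym by (metis carrier_matD index_transpose_mat(1))
  have psd: "0 \<le> (\<Sum>i<n. g i * (\<Sum>j<n. T $$ (i,j) * g j))" for g
    using Tpos[rule_format, of "vec n g"] scalar_prod_mult_mat_vec_sum[OF Tc, of "vec n g"] by simp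
  show ?thesis
    using psd_square_diag_entries[OF \<Lambda>(3) sq sym psd] Tc by (intro eq_matI) auto
qed


lemma psd_sqrt_orthogonal_conj:
  assumes Q: "orthogonal_real_mat n Q"
    and \<Lambda>: "\<Lambda> \<in> carrier_mat n n" "diagonal_mat \<Lambda>" "\<forall>i<n. 0 \<le> \<Lambda> $$ (i,i)"
    and H: "H = Q * \<Lambda> * transpose_mat Q"
  shows "psd_sqrt n H = Q * sqrt_diag_mat n \<Lambda> * transpose_mat Q"
proof -
  let ?N = "sqrt_diag_mat n \<Lambda>"
  have Qc: "Q \<in> carrier_mat n n" and Qtc: "transpose_mat Q \<in> carrier_mat n n"
    and QtQ: "transpose_mat Q * Q = 1\<^sub>m n"
    using Q unfolding orthogonal_real_mat_def by auto
  have QQt: "Q * transpose_mat Q = 1\<^sub>m n" using Q by (rule orthogonal_real_mat_mult_transpose)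
  have "psd_mat n ?N"
    using \<Lambda> by (intro psd_mat_diagonal diagonal_sqrt_diag_mat) auto
  from psd_mat_transpose_conj[OF this Qtc]
  have "psd_mat n (Q * ?N * transpose_mat Q)" by simp
  moreover have "(Q * ?N * transpose_mat Q) * (Q * ?N * transpose_mat Q) = Q * (?N * ?N) * transpose_mat Q"
    by (rule conj_mult_conj[OF sqrt_diag_mat_carrier sqrt_diag_mat_carrier Qtc Qc QtQ])
  then have "(Q * ?N * transpose_mat Q) * (Q * ?N * transpose_mat Q) = H"
    unfolding sqrt_diag_mat_square[OF \<Lambda>] H .
  moreover have "S = Q * ?N * transpose_mat Q" if S: "psd_mat n S" "S * S = H" for S
  proof -
    have Sc: "S \<in> carrier_mat n n" using S unfolding psd_mat_def by simp
    have "(transpose_mat Q * S * Q) * (transpose_mat Q * S * Q) = transpose_mat Q * (S * S) * Q"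
      by (rule conj_mult_conj[OF Sc Sc Qc Qtc QQt])
    also have "\<dots> = \<Lambda>"
      unfolding S(2) H by (rule conj_inverse_conj[OF \<Lambda>(1) Qtc Qc QtQ])
    finally have T: "transpose_mat Q * S * Q = ?N"
      using psd_mat_transpose_conj[OF S(1) Qc] \<Lambda> by (intro psd_square_eq_sqrt_diag_mat)
    have "S = Q * (transpose_mat Q * S * Q) * transpose_mat Q"
      using conj_inverse_conj[OF Sc Qc Qtc QQt] by (rule sym)
    then show ?thesis unfolding T .
  qed
  ultimately show ?thesis unfolding psd_sqrt_def by (intro the_equality) blast+
qed

lemma psd_orthogonal_conj_diag_nonneg:
  assumes H: "psd_mat n H" and Q: "orthogonal_real_mat n Q" and \<Lambda>: "\<Lambda> \<in> carrier_mat n n"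
    and HQ: "H = Q * \<Lambda> * transpose_mat Q" and i: "i < n"
  shows "0 \<le> \<Lambda> $$ (i,i)"
proof -
  have Qc: "Q \<in> carrier_mat n n" and Qtc: "transpose_mat Q \<in> carrier_mat n n"
    and QtQ: "transpose_mat Q * Q = 1\<^sub>m n"
    using Q unfolding orthogonal_real_mat_def by auto
  have "transpose_mat Q * H * Q = \<Lambda>"
    unfolding HQ by (rule conj_inverse_conj[OF \<Lambda> Qtc Qc QtQ])
  with psd_mat_diag_nonneg[OF psd_mat_transpose_conj[OF H Qc] i] show ?thesis by simp
qed

lemma unit_upper_triangular_diag:
  assumes "U \<in> carrier_mat n n" "strictly_upper_triangular U" "i < n"
  shows "(U + 1\<^sub>m n) $$ (i,i) = 1"
  using assms unfolding strictly_upper_triangular_def by simp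

lemma unit_upper_triangular_left_inverse:
  fixes U :: "real mat"
  assumes U: "U \<in> carrier_mat n n" and U_su: "strictly_upper_triangular U"
  obtains V where "V \<in> carrier_mat n n" "V * (U + 1\<^sub>m n) = 1\<^sub>m n"
proof -
  let ?L = "U + 1\<^sub>m n"
  have Lc: "?L \<in> carrier_mat n n" using U by simp
  have "upper_triangular ?L"
    using U U_su unfolding strictly_upper_triangular_def by (intro upper_triangularI) auto
  then have "det ?L = prod_list (diag_mat ?L)" using Lc by (rule det_upper_triangular)
  also have "diag_mat ?L = replicate n 1"
    using U U_su unit_upper_triangular_diag
    by (intro nth_equalityI) (auto simp: diag_mat_def)
  finally have "det ?L = 1" by simp
  then have "?L \<in> Units (ring_mat TYPE(real) n undefined)"
    using det_non_zero_imp_unit[OF Lc] by simp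
  then show ?thesis using that unfolding Units_def ring_mat_def by auto
qed

lemma ldl_orthogonal_factor:
  fixes V L D Q \<Lambda> :: "real mat"
  assumes V: "V \<in> carrier_mat n n" and L: "L \<in> carrier_mat n n" and D: "D \<in> carrier_mat n n"
    and Q: "Q \<in> carrier_mat n n" and \<Lambda>: "\<Lambda> \<in> carrier_mat n n"
    and VL: "V * L = 1\<^sub>m n" and eq: "L * D * transpose_mat L = Q * \<Lambda> * transpose_mat Q"
  shows "V * Q * \<Lambda> * transpose_mat Q = D * transpose_mat L"
    and "V * Q * \<Lambda> * transpose_mat (V * Q) = D"
proof -
  have Qt: "transpose_mat Q \<in> carrier_mat n n" and Vt: "transpose_mat V \<in> carrier_mat n n"
    and Lt: "transpose_mat L \<in> carrier_mat n n" and Q\<Lambda>: "Q * \<Lambda> \<in> carrier_mat n n"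
    and VQ\<Lambda>: "V * Q * \<Lambda> \<in> carrier_mat n n"
    using V L Q \<Lambda> by auto
  have "V * Q * \<Lambda> * transpose_mat Q = V * (Q * \<Lambda> * transpose_mat Q)"
    by (simp only: assoc_mult_mat[OF V Q \<Lambda>] assoc_mult_mat[OF V Q\<Lambda> Qt])
  also have "\<dots> = V * (L * (D * transpose_mat L))"
    by (simp only: eq [symmetric] assoc_mult_mat[OF L D Lt])
  also have "\<dots> = D * transpose_mat L"
    using V L D VL by (intro mult_left_inverse_cancel) auto
  finally show factor: "V * Q * \<Lambda> * transpose_mat Q = D * transpose_mat L" .
  have "V * Q * \<Lambda> * transpose_mat (V * Q) = V * Q * \<Lambda> * transpose_mat Q * transpose_mat V"
    by (simp only: transpose_mult[OF V Q] assoc_mult_mat[OF VQ\<Lambda> Qt Vt])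
  also have "\<dots> = D * transpose_mat (V * L)"
    by (simp only: factor transpose_mult[OF V L] assoc_mult_mat[OF D Lt Vt])
  finally show "V * Q * \<Lambda> * transpose_mat (V * Q) = D"
    using VL D by simp
qed

lemma mtrace_le_incoherence_bound:
  fixes R Q \<Lambda> D :: "real mat"
  assumes R: "R \<in> carrier_mat n n" and Q: "Q \<in> carrier_mat n n"
    and \<Lambda>: "\<Lambda> \<in> carrier_mat n n" "diagonal_mat \<Lambda>" "\<forall>j<n. 0 \<le> \<Lambda> $$ (j,j)"
    and D: "D \<in> carrier_mat n n" "diagonal_mat D" "\<forall>k<n. 0 \<le> D $$ (k,k)"
    and RR: "R * \<Lambda> * transpose_mat R = D"
    and RQ: "\<forall>k<n. (R * \<Lambda> * transpose_mat Q) $$ (k,k) = D $$ (k,k)"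
    and Q_bound: "\<forall>k<n. \<forall>j<n. \<bar>Q $$ (k,j)\<bar> \<le> c"
  shows "mtrace D \<le> c\<^sup>2 * (\<Sum>j<n. sqrt (\<Lambda> $$ (j,j)))\<^sup>2"
proof -
  have Rt: "transpose_mat R \<in> carrier_mat n n" and Qt: "transpose_mat Q \<in> carrier_mat n n"
    using R Q by auto
  have orth: "\<forall>k<n. \<forall>l<n. (\<Sum>j<n. R $$ (k,j) * \<Lambda> $$ (j,j) * R $$ (l,j))
      = (if k = l then D $$ (k,k) else 0)"
    using RR D R \<Lambda> mult_diagonal_mult_entry_sum[OF R \<Lambda>(1) Rt \<Lambda>(2)]
    unfolding diagonal_mat_def by auto
  have diag: "\<forall>k<n. D $$ (k,k) = (\<Sum>j<n. R $$ (k,j) * \<Lambda> $$ (j,j) * Q $$ (k,j))"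
    using RQ Q R \<Lambda> mult_diagonal_mult_entry_sum[OF R \<Lambda>(1) Qt \<Lambda>(2)]
    by auto
  have "mtrace D = (\<Sum>k<n. D $$ (k,k))" using D unfolding mtrace_def by simp
  also have "\<dots> \<le> c\<^sup>2 * (\<Sum>j<n. sqrt (\<Lambda> $$ (j,j)))\<^sup>2"
    by (rule sum_le_incoherence_bound[OF \<Lambda>(3) D(3) orth diag Q_bound])
  finally show ?thesis .
qed

theorem lemma2:
  fixes n :: nat and \<mu> :: real and H U D :: "real mat"
  assumes H_psd: "psd_mat n H"
    and H_inc: "incoherent n \<mu> H"
    and U_carrier: "U \<in> carrier_mat n n"
    and U_su: "strictly_upper_triangular U"
    and D_carrier: "D \<in> carrier_mat n n"
    and D_diag: "diagonal_mat D"
    and D_nonneg: "\<forall>i<n. 0 \<le> D $$ (i,i)"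
    and LDL: "H = (U + 1\<^sub>m n) * D * transpose_mat (U + 1\<^sub>m n)"
  shows "mtrace D \<le> \<mu>\<^sup>2 / real n * (mtrace (psd_sqrt n H))\<^sup>2"
proof -
  obtain Q \<Lambda> where Q: "orthogonal_real_mat n Q" and \<Lambda>: "\<Lambda> \<in> carrier_mat n n" "diagonal_mat \<Lambda>"
    and HQ: "H = Q * \<Lambda> * transpose_mat Q"
    and Q_bound: "\<forall>i<n. \<forall>j<n. \<bar>Q $$ (i,j)\<bar> \<le> \<mu> / sqrt (real n)"
    using H_inc unfolding incoherent_def by blast
  have Qc: "Q \<in> carrier_mat n n" using Q unfolding orthogonal_real_mat_def by simp
  have \<Lambda>_nonneg: "\<forall>i<n. 0 \<le> \<Lambda> $$ (i,i)"
    using psd_orthogonal_conj_diag_nonneg[OF H_psd Q \<Lambda>(1) HQ] by blast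
  obtain V where V: "V \<in> carrier_mat n n" and VL: "V * (U + 1\<^sub>m n) = 1\<^sub>m n"
    using unit_upper_triangular_left_inverse[OF U_carrier U_su] .
  have L: "U + 1\<^sub>m n \<in> carrier_mat n n" using U_carrier by simp
  note factor = ldl_orthogonal_factor[OF V L D_carrier Qc \<Lambda>(1) VL LDL[symmetric, unfolded HQ]]
  have "(V * Q * \<Lambda> * transpose_mat Q) $$ (k,k) = D $$ (k,k)" if k: "k < n" for k
  proof -
    have "(D * transpose_mat (U + 1\<^sub>m n)) $$ (k,k) = D $$ (k,k) * (U + 1\<^sub>m n) $$ (k,k)"
      using diagonal_mat_mult_entry[OF D_carrier _ D_diag k k] U_carrier k by simp
    then show ?thesis
      unfolding factor(1) unit_upper_triangular_diag[OF U_carrier U_su k] by simp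
  qed
  from mtrace_le_incoherence_bound[OF _ Qc \<Lambda> \<Lambda>_nonneg D_carrier D_diag D_nonneg factor(2) _ Q_bound]
  have "mtrace D \<le> (\<mu> / sqrt (real n))\<^sup>2 * (\<Sum>j<n. sqrt (\<Lambda> $$ (j,j)))\<^sup>2"
    using V Qc \<open>\<And>k. k < n \<Longrightarrow> _\<close> by simp
  moreover have "mtrace (psd_sqrt n H) = (\<Sum>j<n. sqrt (\<Lambda> $$ (j,j)))"
    using psd_sqrt_orthogonal_conj[OF Q \<Lambda> \<Lambda>_nonneg HQ] mtrace_orthogonal_conj[OF Q]
    by (simp add: mtrace_sqrt_diag_mat)
  ultimately show ?thesis by (simp add: power_divide)
qed

end
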